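(* Let $\mathrm P$ be a polymatroid on $E$ of rank $r\le n$. Then in the polytope algebra $\overline{\mathbb I}(\Sigma_{\widetilde E})$ one has $[I(\pi^*(\mathrm P))]=[I(\mathrm M_\pi(\mathrm P))]+\sum_k a_k[I(\mathrm M_k)]$ for some integers $a_k$ and matroids $\mathrm M_k$ on $\widetilde E$ each of rank strictly less than $r$.
   Context: $E=\{1,\dots,m\}$, $\widetilde E$ an $n$-element set, $\pi:\widetilde E\to E$ a map, $\mathbf e_U=\sum_{j\in U}\mathbf e_j$. A polymatroid on $E$ is a submodular monotone $\operatorname{rk}_{\mathrm P}:2^E\to\mathbb Z_{\ge0}$ with $\operatorname{rk}_{\mathrm P}(\emptyset)=0$; rank $\operatorname{rk}_{\mathrm P}(E)$; independence polytope $I(\mathrm P)=\{x\ge0:\sum_{i\in S}x_i\le\operatorname{rk}_{\mathrm P}(S)\ \forall S\}$ (a matroid is the case where all singletons have rank $\le1$). The expansion $\pi^*(\mathrm P)$ is the polymatroid on $\widetilde E$ with rank $U\mapsto\operatorname{rk}_{\mathrm P}(\pi(U))$. The multisymmetric lift $\mathrm M_\pi(\mathrm P)$ is the matroid on $\widetilde E$ with rank $U\mapsto\min_{A\subseteq E}\{\operatorname{rk}_{\mathrm P}(A)+|U\setminus\pi^{-1}(A)|\}$. The stellahedral fan $\Sigma_{\widetilde E}$ in $\mathbb R^{\widetilde E}$ has cones $\operatorname{cone}(-\mathbf e_{\widetilde E\setminus F_1},\dots,-\mathbf e_{\widetilde E\setminus F_k},\mathbf e_j:j\in I)$ for chains $F_1\subsetneq\dots\subsetneq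 F_k\subsetneq\widetilde E$ and $I\subseteq F_1$ (with $F_1=\widetilde E$ if $k=0$). For a unimodular projective fan $\Sigma$ in $\mathbb R^\ell$, the polytope algebra $\overline{\mathbb I}(\Sigma)$ is the group generated by indicator functions $\mathbf 1_Q$ of lattice polytopes $Q$ whose normal fan coarsens $\Sigma$, modulo $\mathbf 1_Q-\mathbf 1_{Q+u}$, $u\in\mathbb Z^\ell$; $[Q]$ denotes the class of $\mathbf 1_Q$. *)

theory Defs
  imports "HOL-Analysis.Analysis"
begin

definition polymatroid :: "'a set \<Rightarrow> ('a set \<Rightarrow> nat) \<Rightarrow> bool" where
  "polymatroid E rk \<longleftrightarrow>
     rk {} = 0 \<and>
     (\<forall>A B. A \<subseteq> B \<and> B \<subseteq> E \<longrightarrow> rk A \<le> rk B) \<and>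
     (\<forall>A B. A \<subseteq> E \<and> B \<subseteq> E \<longrightarrow> rk (A \<union> B) + rk (A \<inter> B) \<le> rk A + rk B)"

definition matroid :: "'a set \<Rightarrow> ('a set \<Rightarrow> nat) \<Rightarrow> bool" where
  "matroid E rk \<longleftrightarrow> polymatroid E rk \<and> (\<forall>j\<in>E. rk {j} \<le> 1)"

definition indep_polytope :: "('e::finite set \<Rightarrow> nat) \<Rightarrow> (real^'e) set" where
  "indep_polytope rk = {x. (\<forall>i. 0 \<le> x $ i) \<and> (\<forall>S. (\<Sum>i\<in>S. x $ i) \<le> real (rk S))}"

definition expansion :: "('e \<Rightarrow> 'b) \<Rightarrow> ('b set \<Rightarrow> nat) \<Rightarrow> ('e set \<Rightarrow> nat)" where
  "expansion \<pi> rk = (\<lambda>U. rk (\<pi> ` U))"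

definition multisym_lift :: "'b set \<Rightarrow> ('e \<Rightarrow> 'b) \<Rightarrow> ('b set \<Rightarrow> nat) \<Rightarrow> ('e set \<Rightarrow> nat)" where
  "multisym_lift E \<pi> rk = (\<lambda>U. Min {rk A + card (U - \<pi> -` A) | A. A \<subseteq> E})"

definition indvec :: "'e::finite set \<Rightarrow> real^'e" where
  "indvec S = (\<chi> j. if j \<in> S then 1 else 0)"

text \<open>Generators of the cone of the stellahedral fan indexed by a chain \<F> of proper
  subsets of UNIV (strictly nested, i.e. totally ordered by inclusion) and a set
  I \<subseteq> F_1 = \<Inter>\<F> (with F_1 = UNIV when the chain is empty).\<close>
definition stell_cone_data :: "'e::finite set set \<Rightarrow> 'e set \<Rightarrow> bool" where
  "stell_cone_data \<F> I \<longleftrightarrow>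
     (\<forall>F\<in>\<F>. F \<noteq> UNIV) \<and> (\<forall>F\<in>\<F>. \<forall>G\<in>\<F>. F \<subseteq> G \<or> G \<subseteq> F) \<and> I \<subseteq> \<Inter>\<F>"

definition stell_cone_gens :: "'e::finite set set \<Rightarrow> 'e set \<Rightarrow> (real^'e) set" where
  "stell_cone_gens \<F> I = {- indvec (UNIV - F) | F. F \<in> \<F>} \<union> {indvec {j} | j. j \<in> I}"

definition stell_cone :: "'e::finite set set \<Rightarrow> 'e set \<Rightarrow> (real^'e) set" where
  "stell_cone \<F> I = cone hull (stell_cone_gens \<F> I)"

text \<open>The (inner) normal fan of Q is coarsened by the stellahedral fan iff every cone of
  the stellahedral fan is contained in a cone of the normal fan, i.e. there is a point
  of Q minimizing every linear functional of the cone simultaneously.\<close>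
definition normal_fan_coarsens_stell :: "(real^'e::finite) set \<Rightarrow> bool" where
  "normal_fan_coarsens_stell Q \<longleftrightarrow>
     (\<forall>\<F> I. stell_cone_data \<F> I \<longrightarrow>
        (\<exists>x\<in>Q. \<forall>w\<in>stell_cone \<F> I. \<forall>y\<in>Q. w \<bullet> x \<le> w \<bullet> y))"

definition integral_vec :: "real^'e::finite \<Rightarrow> bool" where
  "integral_vec v \<longleftrightarrow> (\<forall>i. v $ i \<in> \<int>)"

definition lattice_polytope :: "(real^'e::finite) set \<Rightarrow> bool" where
  "lattice_polytope Q \<longleftrightarrow>
     (\<exists>V. finite V \<and> V \<noteq> {} \<and> (\<forall>v\<in>V. integral_vec v) \<and> Q = convex hull V)"

definition stell_admissible :: "(real^'e::finite) set \<Rightarrow> bool" where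
  "stell_admissible Q \<longleftrightarrow> lattice_polytope Q \<and> normal_fan_coarsens_stell Q"

definition indic :: "(real^'e::finite) set \<Rightarrow> real^'e \<Rightarrow> int" where
  "indic Q = (\<lambda>x. if x \<in> Q then 1 else 0)"

text \<open>The subgroup generated by the translation relations 1_Q - 1_{Q+u}, Q admissible,
  u integral. Two integer combinations of indicator functions define the same element of
  the polytope algebra iff their difference lies in this subgroup.\<close>
inductive_set stell_translation_rel :: "(real^'e::finite \<Rightarrow> int) set" where
  zero: "(\<lambda>_. 0) \<in> stell_translation_rel"
| step: "f \<in> stell_translation_rel \<Longrightarrow> stell_admissible Q \<Longrightarrow> integral_vec u \<Longrightarrow>
         (\<lambda>x. f x + c * (indic Q x - indic ((\<lambda>y. y + u) ` Q) x)) \<in> stell_translation_rel"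

end

theory Submission
  imports Defs
begin

(* Every point of Q = I(pi^* P) has coordinates in [0, r]. On [0, r] the constant 1 is the sum
   of the indicators of the intervals [k, k + 1] (0 <= k <= r) minus those of the points k
   (1 <= k <= r); multiplying over all coordinates writes 1_Q as a signed sum of the indicators
   of the slices of Q by product cells. The cell [0, 1]^n cuts out I(M_pi(P)). Any other cell C
   has a nonzero corner z, and Q inter C is the translate by z of
   {y in [0, 1]^T : y(S) <= rk(pi S) - z(S)}, which is the independence polytope of a matroid of
   rank at most r - |z| < r: make S |-> rk(pi S) - z(S) monotone by minimising over supersets,
   then convolve with the free matroid on T. Independence polytopes of polymatroids are lattice
   polytopes whose normal fans are coarsened by the stellahedral fan (both by the greedy
   algorithm), so modulo translations each slice may be moved back to the origin. *)

section \<open>Integer polymatroids and their polytopes\<close>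

definition submodular :: "('a set \<Rightarrow> int) \<Rightarrow> bool" where
  "submodular g \<longleftrightarrow> (\<forall>A B. g (A \<union> B) + g (A \<inter> B) \<le> g A + g B)"

definition int_polymatroid :: "('a set \<Rightarrow> int) \<Rightarrow> bool" where
  "int_polymatroid g \<longleftrightarrow> g {} = 0 \<and> mono g \<and> submodular g"

definition int_indep_polytope :: "('e::finite set \<Rightarrow> int) \<Rightarrow> (real^'e) set" where
  "int_indep_polytope g = {y. (\<forall>i. 0 \<le> y $ i) \<and> (\<forall>S. (\<Sum>i\<in>S. y $ i) \<le> of_int (g S))}"

lemma submodularD: "submodular g \<Longrightarrow> g (A \<union> B) + g (A \<inter> B) \<le> g A + g B"
  by (simp add: submodular_def)

lemma submodular_diff_sum:
  fixes f :: "'e::finite set \<Rightarrow> int"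
  assumes "submodular f"
  shows "submodular (\<lambda>S. f S - (\<Sum>i\<in>S. z i))"
  unfolding submodular_def
proof (intro allI)
  fix A B :: "'e set"
  have "sum z (A \<union> B) + sum z (A \<inter> B) = sum z A + sum z B"
    by (rule sum.union_inter) simp_all
  with submodularD[OF assms, of A B]
  show "f (A \<union> B) - sum z (A \<union> B) + (f (A \<inter> B) - sum z (A \<inter> B)) \<le> f A - sum z A + (f B - sum z B)"
    by linarith
qed

lemma int_polymatroid_empty: "int_polymatroid g \<Longrightarrow> g {} = 0"
  by (simp add: int_polymatroid_def)

lemma int_polymatroid_mono: "int_polymatroid g \<Longrightarrow> A \<subseteq> B \<Longrightarrow> g A \<le> g B"
  by (simp add: int_polymatroid_def monoD)

lemma int_polymatroid_submodular: "int_polymatroid g \<Longrightarrow> submodular g"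
  by (simp add: int_polymatroid_def)

lemma int_polymatroid_nonneg: "int_polymatroid g \<Longrightarrow> 0 \<le> g A"
  using int_polymatroid_mono[of g "{}" A] int_polymatroid_empty[of g] by simp

lemma int_indep_polytope_nonneg: "y \<in> int_indep_polytope g \<Longrightarrow> 0 \<le> y $ i"
  by (simp add: int_indep_polytope_def)

lemma int_indep_polytope_sum_le: "y \<in> int_indep_polytope g \<Longrightarrow> (\<Sum>i\<in>S. y $ i) \<le> of_int (g S)"
  by (simp add: int_indep_polytope_def)

lemma mem_int_indep_polytope_imp_nonneg:
  assumes "y \<in> int_indep_polytope g"
  shows "0 \<le> g S"
proof -
  have "0 \<le> (\<Sum>i\<in>S. y $ i)"
    using assms by (simp add: int_indep_polytope_nonneg sum_nonneg)
  also have "\<dots> \<le> of_int (g S)"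
    using assms by (rule int_indep_polytope_sum_le)
  finally show ?thesis by simp
qed

lemma indep_polytope_eq_int_indep_polytope:
  "indep_polytope rk = int_indep_polytope (\<lambda>S. int (rk S))"
  by (simp add: indep_polytope_def int_indep_polytope_def)

lemma polymatroid_imp_int_polymatroid:
  "polymatroid UNIV rk \<Longrightarrow> int_polymatroid (\<lambda>S. int (rk S))"
  unfolding polymatroid_def int_polymatroid_def submodular_def mono_def
  by (metis (no_types, lifting) of_nat_add of_nat_le_iff top_greatest of_nat_0)

lemma int_polymatroid_imp_polymatroid:
  assumes "int_polymatroid q"
  shows "polymatroid UNIV (\<lambda>U. nat (q U))"
    and "indep_polytope (\<lambda>U. nat (q U)) = int_indep_polytope q"
proof -
  have nonneg: "0 \<le> q U" for U
    using assms by (rule int_polymatroid_nonneg)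
  show "polymatroid UNIV (\<lambda>U. nat (q U))"
    unfolding polymatroid_def
  proof (intro conjI allI impI)
    show "nat (q {}) = 0"
      using assms by (simp add: int_polymatroid_empty)
    show "nat (q A) \<le> nat (q B)" if "A \<subseteq> B \<and> B \<subseteq> UNIV" for A B
      using that assms by (simp add: int_polymatroid_mono nat_mono)
    show "nat (q (A \<union> B)) + nat (q (A \<inter> B)) \<le> nat (q A) + nat (q B)" for A B
      using submodularD[OF int_polymatroid_submodular[OF assms], of A B]
        nonneg[of A] nonneg[of B] nonneg[of "A \<union> B"] nonneg[of "A \<inter> B"]
      by linarith
  qed
  show "indep_polytope (\<lambda>U. nat (q U)) = int_indep_polytope q"
    using nonneg by (simp add: indep_polytope_eq_int_indep_polytope)
qed

lemma convex_int_indep_polytope: "convex (int_indep_polytope g)"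
proof (rule convexI)
  fix x y and u v :: real
  assume x: "x \<in> int_indep_polytope g" and y: "y \<in> int_indep_polytope g"
    and uv: "0 \<le> u" "0 \<le> v" "u + v = 1"
  have "(\<Sum>i\<in>S. (u *\<^sub>R x + v *\<^sub>R y) $ i) \<le> of_int (g S)" for S
  proof -
    have "(\<Sum>i\<in>S. (u *\<^sub>R x + v *\<^sub>R y) $ i) = u * (\<Sum>i\<in>S. x $ i) + v * (\<Sum>i\<in>S. y $ i)"
      by (simp add: sum.distrib sum_distrib_left)
    also have "\<dots> \<le> u * of_int (g S) + v * of_int (g S)"
      using x y uv by (intro add_mono mult_left_mono) (auto simp: int_indep_polytope_sum_le)
    also have "\<dots> = of_int (g S)"
      using uv by (simp add: distrib_right[symmetric])
    finally show ?thesis .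
  qed
  then show "u *\<^sub>R x + v *\<^sub>R y \<in> int_indep_polytope g"
    using x y uv by (auto simp: int_indep_polytope_def)
qed

section \<open>The greedy algorithm\<close>

(* The list is read from the right: each element gets its marginal value over the elements
   following it. *)
fun greedy_increment :: "('a set \<Rightarrow> int) \<Rightarrow> 'a list \<Rightarrow> 'a \<Rightarrow> int" where
  "greedy_increment g [] = (\<lambda>_. 0)"
| "greedy_increment g (e # xs) = (greedy_increment g xs)(e := g (insert e (set xs)) - g (set xs))"

definition greedy_point :: "('e::finite set \<Rightarrow> int) \<Rightarrow> 'e list \<Rightarrow> real^'e" where
  "greedy_point g xs = (\<chi> i. of_int (greedy_increment g xs i))"

lemma greedy_increment_nonneg: "mono g \<Longrightarrow> 0 \<le> greedy_increment g xs i"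
  by (induction xs) (auto simp: monoD subset_insertI)

lemma greedy_increment_notin: "i \<notin> set xs \<Longrightarrow> greedy_increment g xs i = 0"
  by (induction xs) auto

lemma sum_greedy_increment_le:
  fixes g :: "'e::finite set \<Rightarrow> int"
  assumes "int_polymatroid g" "distinct xs"
  shows "(\<Sum>i\<in>S. greedy_increment g xs i) \<le> g (S \<inter> set xs)"
  using assms(2)
proof (induction xs arbitrary: S)
  case Nil
  then show ?case using int_polymatroid_empty[OF assms(1)] by simp
next
  case (Cons e xs)
  show ?case
  proof (cases "e \<in> S")
    case False
    then have "(\<Sum>i\<in>S. greedy_increment g (e # xs) i) = (\<Sum>i\<in>S. greedy_increment g xs i)"
      by (intro sum.cong) auto
    with Cons False show ?thesis by auto
  next
    case True
    let ?S' = "S \<inter> set xs"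
    have "(\<Sum>i\<in>S. greedy_increment g (e # xs) i)
        = greedy_increment g (e # xs) e + (\<Sum>i\<in>S - {e}. greedy_increment g (e # xs) i)"
      by (rule sum.remove[OF finite True])
    also have "(\<Sum>i\<in>S - {e}. greedy_increment g (e # xs) i) = (\<Sum>i\<in>S - {e}. greedy_increment g xs i)"
      by (intro sum.cong) auto
    finally have split: "(\<Sum>i\<in>S. greedy_increment g (e # xs) i)
        = g (insert e (set xs)) - g (set xs) + (\<Sum>i\<in>S - {e}. greedy_increment g xs i)"
      by simp
    have "(S - {e}) \<inter> set xs = ?S'"
      using Cons.prems by auto
    then have IH: "(\<Sum>i\<in>S - {e}. greedy_increment g xs i) \<le> g ?S'"
      using Cons.IH[of "S - {e}"] Cons.prems by simp
    have un: "insert e ?S' \<union> set xs = insert e (set xs)" and int: "insert e ?S' \<inter> set xs = ?S'"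
      using Cons.prems by auto
    have sub: "g (insert e (set xs)) + g ?S' \<le> g (insert e ?S') + g (set xs)"
      using submodularD[OF int_polymatroid_submodular[OF assms(1)], of "insert e ?S'" "set xs"]
      unfolding un int .
    have "S \<inter> set (e # xs) = insert e ?S'"
      using True by auto
    then show ?thesis
      using split IH sub by simp
  qed
qed

lemma sum_greedy_increment_suffix:
  assumes "distinct (zs @ ys)"
  shows "(\<Sum>i\<in>set ys. greedy_increment g (zs @ ys) i) = g (set ys) - g {}"
  using assms
proof (induction zs)
  case Nil
  then show ?case
  proof (induction ys)
    case (Cons e ys)
    have "(\<Sum>i\<in>set ys. greedy_increment g (e # ys) i) = (\<Sum>i\<in>set ys. greedy_increment g ys i)"
      using Cons.prems by (intro sum.cong) auto
    with Cons show ?case by simp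
  qed simp
next
  case (Cons z zs)
  have "(\<Sum>i\<in>set ys. greedy_increment g (z # zs @ ys) i) = (\<Sum>i\<in>set ys. greedy_increment g (zs @ ys) i)"
    using Cons.prems by (intro sum.cong) auto
  with Cons show ?case by simp
qed

lemma sum_greedy_point: "(\<Sum>i\<in>S. greedy_point g xs $ i) = of_int (\<Sum>i\<in>S. greedy_increment g xs i)"
  by (simp add: greedy_point_def)

lemma greedy_point_in_int_indep_polytope:
  assumes "int_polymatroid g" "distinct xs"
  shows "greedy_point g xs \<in> int_indep_polytope g"
proof -
  have "(\<Sum>i\<in>S. greedy_point g xs $ i) \<le> of_int (g S)" for S
  proof -
    have "(\<Sum>i\<in>S. greedy_increment g xs i) \<le> g (S \<inter> set xs)"
      using assms by (rule sum_greedy_increment_le)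
    also have "\<dots> \<le> g S"
      using assms(1) by (rule int_polymatroid_mono) auto
    finally show ?thesis
      unfolding sum_greedy_point of_int_le_iff .
  qed
  moreover have "0 \<le> greedy_point g xs $ i" for i
    using assms(1) by (simp add: greedy_point_def greedy_increment_nonneg int_polymatroid_def)
  ultimately show ?thesis
    by (simp add: int_indep_polytope_def)
qed

lemma chain_subset_as_suffixes:
  fixes C :: "'e::finite set set"
  assumes "chain\<^sub>\<subseteq> C"
  shows "\<exists>xs. distinct xs \<and> set xs = \<Union>C \<and> (\<forall>S\<in>C. \<exists>zs ys. xs = zs @ ys \<and> set ys = S)"
  using finite[of C] assms
proof (induction C rule: finite_remove_induct)
  case empty
  show ?case
    by (intro exI[of _ "[]"]) simp
next
  case (remove C)
  let ?M = "\<Union>C"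
  have M_in: "?M \<in> C"
    using remove.hyps remove.prems by (intro Union_in_chain) (simp_all add: chain_subset_alt_def)
  have "chain\<^sub>\<subseteq> (C - {?M})"
    using remove.prems by (auto simp: chain_subset_def)
  with remove.IH[OF M_in] obtain ys where ys: "distinct ys" "set ys = \<Union>(C - {?M})"
    "\<forall>S\<in>C - {?M}. \<exists>zs ys'. ys = zs @ ys' \<and> set ys' = S"
    by auto
  obtain ws where ws: "distinct ws" "set ws = ?M - set ys"
    using finite_distinct_list[of "?M - set ys"] by auto
  have ys_M: "set ys \<subseteq> ?M"
    using ys(2) by auto
  have "\<exists>zs ys'. ws @ ys = zs @ ys' \<and> set ys' = S" if "S \<in> C" for S
  proof (cases "S = ?M")
    case True
    then show ?thesis
      using ws(2) ys_M by (intro exI[of _ "[]"] exI[of _ "ws @ ys"]) auto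
  next
    case False
    with that have "S \<in> C - {?M}"
      by simp
    with ys(3) have "\<exists>zs ys'. ys = zs @ ys' \<and> set ys' = S"
      by (rule bspec)
    then obtain zs ys' where "ys = zs @ ys'" "set ys' = S"
      by blast
    then show ?thesis
      by (intro exI[of _ "ws @ zs"] exI[of _ ys']) auto
  qed
  moreover have "set (ws @ ys) = ?M" "distinct (ws @ ys)"
    using ws ys(1) ys_M by auto
  ultimately show ?case
    by (intro exI[of _ "ws @ ys"]) blast
qed

lemma greedy_point_tight_on_chain:
  fixes g :: "'e::finite set \<Rightarrow> int"
  assumes "int_polymatroid g" "chain\<^sub>\<subseteq> C"
  shows "\<exists>xs. distinct xs \<and> set xs = \<Union>C \<and> (\<forall>S\<in>C. (\<Sum>i\<in>S. greedy_point g xs $ i) = of_int (g S))"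
proof -
  obtain xs where xs: "distinct xs" "set xs = \<Union>C" "\<forall>S\<in>C. \<exists>zs ys. xs = zs @ ys \<and> set ys = S"
    using chain_subset_as_suffixes[OF assms(2)] by auto
  have "(\<Sum>i\<in>S. greedy_point g xs $ i) = of_int (g S)" if "S \<in> C" for S
  proof -
    from xs(3) that have "\<exists>zs ys. xs = zs @ ys \<and> set ys = S"
      by (rule bspec)
    then obtain zs ys where zs_ys: "xs = zs @ ys" "set ys = S"
      by blast
    have "(\<Sum>i\<in>S. greedy_increment g xs i) = g S"
      using sum_greedy_increment_suffix[of zs ys g] xs(1) int_polymatroid_empty[OF assms(1)]
      unfolding zs_ys by simp
    then show ?thesis
      unfolding sum_greedy_point by simp
  qed
  with xs(1,2) show ?thesis
    by auto
qed

lemma chain_subset_insert_top: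
  assumes "chain\<^sub>\<subseteq> C" "\<And>S. S \<in> C \<Longrightarrow> S \<subseteq> P"
  shows "chain\<^sub>\<subseteq> (insert P C)"
  using assms by (auto simp: chain_subset_def)

lemma sum_indicator_combination_insert:
  assumes "finite C" "P \<notin> C"
  shows "(\<Sum>S\<in>insert P C. (a(P := \<alpha>)) S * of_bool (i \<in> S))
    = \<alpha> * of_bool (i \<in> P) + (\<Sum>S\<in>C. a S * of_bool (i \<in> S))"
proof -
  have "(\<Sum>S\<in>C. (a(P := \<alpha>)) S * of_bool (i \<in> S)) = (\<Sum>S\<in>C. a S * of_bool (i \<in> S))"
    using assms(2) by (intro sum.cong) auto
  with assms show ?thesis
    by simp
qed

lemma sum_mult_indicator_combination:
  fixes v :: "real^'e::finite"
  shows "(\<Sum>i\<in>UNIV. (\<Sum>S\<in>C. a S * of_bool (i \<in> S)) * v $ i) = (\<Sum>S\<in>C. a S * (\<Sum>i\<in>S. v $ i))"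
proof -
  have "(\<Sum>i\<in>UNIV. (\<Sum>S\<in>C. a S * of_bool (i \<in> S)) * v $ i)
      = (\<Sum>S\<in>C. \<Sum>i\<in>UNIV. a S * of_bool (i \<in> S) * v $ i)"
    unfolding sum_distrib_right by (rule sum.swap)
  also have "\<dots> = (\<Sum>S\<in>C. a S * (\<Sum>i\<in>S. v $ i))"
    by (simp add: sum_distrib_left mult.assoc mult.left_commute[of "a _"])
  finally show ?thesis .
qed

lemma positive_part_as_chain_sum:
  fixes w :: "real^'e::finite"
  shows "\<exists>C a. chain\<^sub>\<subseteq> C \<and> (\<forall>S\<in>C. S \<subseteq> {i. 0 < w $ i}) \<and> (\<forall>S. 0 \<le> a S) \<and>
     (\<forall>i. max (w $ i) 0 = (\<Sum>S\<in>C. a S * of_bool (i \<in> S)))"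
proof (induction "card {i. 0 < w $ i}" arbitrary: w rule: less_induct)
  case less
  define P where "P = {i. 0 < w $ i}"
  show ?case
  proof (cases "P = {}")
    case True
    then show ?thesis
      by (intro exI[of _ "{}"] exI[of _ "\<lambda>_. 0"]) (auto simp: chain_subset_def P_def max_def not_less)
  next
    case False
    define \<alpha> where "\<alpha> = Min ((\<lambda>i. w $ i) ` P)"
    have "\<alpha> \<in> (\<lambda>i. w $ i) ` P"
      unfolding \<alpha>_def using False by (intro Min_in) auto
    then obtain i0 where i0: "i0 \<in> P" "w $ i0 = \<alpha>"
      by auto
    have \<alpha>_pos: "0 < \<alpha>"
      using i0 by (simp add: P_def)
    have \<alpha>_le: "\<alpha> \<le> w $ i" if "i \<in> P" for i
      using that by (simp add: \<alpha>_def)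
    define w' where "w' = (\<chi> i. if i \<in> P then w $ i - \<alpha> else w $ i)"
    have P': "{i. 0 < w' $ i} \<subseteq> P - {i0}"
      using i0 by (auto simp: w'_def P_def)
    then have "card {i. 0 < w' $ i} < card {i. 0 < w $ i}"
      using card_mono[OF finite P'] card_Diff1_less[OF finite i0(1)] unfolding P_def by linarith
    from less[OF this] obtain C a where C: "chain\<^sub>\<subseteq> C" "\<forall>S\<in>C. S \<subseteq> {i. 0 < w' $ i}"
      "\<forall>S. 0 \<le> a S" "\<forall>i. max (w' $ i) 0 = (\<Sum>S\<in>C. a S * of_bool (i \<in> S))"
      by (elim exE conjE)
    have C_sub: "S \<subseteq> P - {i0}" if "S \<in> C" for S
      using C(2) P' that by blast
    then have "P \<notin> C"
      using i0(1) by blast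
    have shift: "max (w $ i) 0 = \<alpha> * of_bool (i \<in> P) + max (w' $ i) 0" for i
      using \<alpha>_le[of i] by (cases "i \<in> P") (simp_all add: w'_def P_def max_def)
    have "max (w $ i) 0 = (\<Sum>S\<in>insert P C. (a(P := \<alpha>)) S * of_bool (i \<in> S))" for i
      unfolding sum_indicator_combination_insert[OF finite \<open>P \<notin> C\<close>] shift C(4)[rule_format] ..
    moreover have "chain\<^sub>\<subseteq> (insert P C)"
      using C(1) C_sub by (intro chain_subset_insert_top) auto
    moreover have "\<forall>S\<in>insert P C. S \<subseteq> {i. 0 < w $ i}"
      using C_sub by (auto simp: P_def)
    moreover have "\<forall>S. 0 \<le> (a(P := \<alpha>)) S"
      using C(3) \<alpha>_pos by simp
    ultimately show ?thesis
      by (intro exI[of _ "insert P C"] exI[of _ "a(P := \<alpha>)"] conjI allI) simp_all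
  qed
qed

(* Write max w 0 as a nonnegative combination of indicators of a chain; the greedy point tight
   on that chain then maximises every term. *)
lemma greedy_point_maximizes:
  fixes g :: "'e::finite set \<Rightarrow> int" and w :: "real^'e"
  assumes g: "int_polymatroid g"
  shows "\<exists>xs. distinct xs \<and> (\<forall>y\<in>int_indep_polytope g. w \<bullet> y \<le> w \<bullet> greedy_point g xs)"
proof -
  obtain C a where C: "chain\<^sub>\<subseteq> C" "\<forall>S\<in>C. S \<subseteq> {i. 0 < w $ i}" "\<forall>S. 0 \<le> a S"
      "\<forall>i. max (w $ i) 0 = (\<Sum>S\<in>C. a S * of_bool (i \<in> S))"
    using positive_part_as_chain_sum[of w] by (elim exE conjE)
  obtain xs where xs: "distinct xs" "set xs = \<Union>C"
      "\<forall>S\<in>C. (\<Sum>i\<in>S. greedy_point g xs $ i) = of_int (g S)"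
    using greedy_point_tight_on_chain[OF g C(1)] by (elim exE conjE)
  define x where "x = greedy_point g xs"
  have pos_part_inner: "(\<Sum>i\<in>UNIV. max (w $ i) 0 * v $ i) = (\<Sum>S\<in>C. a S * (\<Sum>i\<in>S. v $ i))"
    for v :: "real^'e"
    unfolding C(4)[rule_format] by (rule sum_mult_indicator_combination)
  have "w $ i * x $ i = max (w $ i) 0 * x $ i" for i
  proof (cases "0 < w $ i")
    case False
    then have "i \<notin> set xs"
      using xs(2) C(2) by auto
    then show ?thesis
      by (simp add: x_def greedy_point_def greedy_increment_notin)
  qed simp
  then have "w \<bullet> x = (\<Sum>i\<in>UNIV. max (w $ i) 0 * x $ i)"
    unfolding inner_vec_def by (intro sum.cong) simp_all
  also have "\<dots> = (\<Sum>S\<in>C. a S * of_int (g S))"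
    unfolding pos_part_inner using xs(3) by (simp add: x_def)
  finally have wx: "w \<bullet> x = (\<Sum>S\<in>C. a S * of_int (g S))" .
  have "w \<bullet> y \<le> w \<bullet> x" if y: "y \<in> int_indep_polytope g" for y
  proof -
    have "w \<bullet> y \<le> (\<Sum>i\<in>UNIV. max (w $ i) 0 * y $ i)"
      unfolding inner_vec_def using y
      by (auto intro!: sum_mono mult_right_mono simp: int_indep_polytope_nonneg)
    also have "\<dots> = (\<Sum>S\<in>C. a S * (\<Sum>i\<in>S. y $ i))"
      by (rule pos_part_inner)
    also have "\<dots> \<le> (\<Sum>S\<in>C. a S * of_int (g S))"
      using y C(3) by (intro sum_mono mult_left_mono) (auto simp: int_indep_polytope_sum_le)
    finally show ?thesis
      using wx by simp
  qed
  with xs(1) show ?thesis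
    unfolding x_def by blast
qed

lemma int_indep_polytope_eq_hull_greedy_points:
  fixes g :: "'e::finite set \<Rightarrow> int"
  assumes g: "int_polymatroid g"
  shows "int_indep_polytope g = convex hull (greedy_point g ` {xs. distinct xs})"
    (is "_ = convex hull ?V")
proof
  show "convex hull ?V \<subseteq> int_indep_polytope g"
    using greedy_point_in_int_indep_polytope[OF g] convex_int_indep_polytope
    by (intro hull_minimal) auto
  show "int_indep_polytope g \<subseteq> convex hull ?V"
  proof
    fix y assume y: "y \<in> int_indep_polytope g"
    show "y \<in> convex hull ?V"
    proof (rule ccontr)
      assume "y \<notin> convex hull ?V"
      moreover have "finite ?V"
        using finite_subset_distinct[of "UNIV :: 'e set"] by simp
      ultimately obtain a b where ab: "a \<bullet> y < b" "\<forall>x\<in>convex hull ?V. b < a \<bullet> x"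
        using separating_hyperplane_closed_point[OF convex_convex_hull]
        by (metis compact_imp_closed finite_imp_compact_convex_hull)
      obtain xs where xs: "distinct xs" "\<forall>y\<in>int_indep_polytope g. (- a) \<bullet> y \<le> (- a) \<bullet> greedy_point g xs"
        using greedy_point_maximizes[OF g, of "- a"] by (elim exE conjE)
      have "greedy_point g xs \<in> convex hull ?V"
        using xs(1) by (intro hull_inc) simp
      with ab xs(2) y show False
        by fastforce
    qed
  qed
qed

lemma lattice_polytope_int_indep_polytope:
  fixes g :: "'e::finite set \<Rightarrow> int"
  assumes "int_polymatroid g"
  shows "lattice_polytope (int_indep_polytope g)"
  unfolding lattice_polytope_def int_indep_polytope_eq_hull_greedy_points[OF assms]
proof (intro exI conjI)
  show "finite (greedy_point g ` {xs. distinct xs})"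
    using finite_subset_distinct[of "UNIV :: 'e set"] by simp
  show "greedy_point g ` {xs. distinct xs} \<noteq> {}"
    using distinct.simps(1) by blast
  show "\<forall>v\<in>greedy_point g ` {xs. distinct xs}. integral_vec v"
    by (auto simp: integral_vec_def greedy_point_def)
qed (rule refl)

lemma inner_indvec: "indvec S \<bullet> (v :: real^'e::finite) = (\<Sum>i\<in>S. v $ i)"
proof -
  have "indvec S \<bullet> v = (\<Sum>i\<in>UNIV. of_bool (i \<in> S) * v $ i)"
    unfolding inner_vec_def indvec_def of_bool_def by simp
  then show ?thesis
    by simp
qed

(* A greedy point that is tight on the complements of the chain and vanishes on their
   intersection minimises every generator of the cone. *)
lemma normal_fan_coarsens_stell_int_indep_polytope:
  fixes g :: "'e::finite set \<Rightarrow> int"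
  assumes g: "int_polymatroid g"
  shows "normal_fan_coarsens_stell (int_indep_polytope g)"
  unfolding normal_fan_coarsens_stell_def
proof (intro allI impI)
  fix \<F> :: "'e set set" and I
  assume data: "stell_cone_data \<F> I"
  define C where "C = (\<lambda>F. UNIV - F) ` \<F>"
  have chain_C: "chain\<^sub>\<subseteq> C"
    using data by (auto simp: C_def stell_cone_data_def chain_subset_def)
  obtain xs where xs: "distinct xs" "set xs = \<Union>C"
      "\<forall>S\<in>C. (\<Sum>i\<in>S. greedy_point g xs $ i) = of_int (g S)"
    using greedy_point_tight_on_chain[OF g chain_C] by (elim exE conjE)
  define x where "x = greedy_point g xs"
  define K where "K = {w. \<forall>y\<in>int_indep_polytope g. w \<bullet> x \<le> w \<bullet> y}"
  have "cone K"
    by (auto simp: cone_def K_def inner_commute intro: mult_left_mono)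
  moreover have "stell_cone_gens \<F> I \<subseteq> K"
  proof
    fix w assume "w \<in> stell_cone_gens \<F> I"
    then consider (chain) F where "F \<in> \<F>" "w = - indvec (UNIV - F)"
      | (coord) j where "j \<in> I" "w = indvec {j}"
      unfolding stell_cone_gens_def by blast
    then show "w \<in> K"
    proof cases
      case chain
      then have "(\<Sum>i\<in>UNIV - F. x $ i) = of_int (g (UNIV - F))"
        using xs(3) by (simp add: C_def x_def)
      then show ?thesis
        using chain(2) by (auto simp: K_def inner_indvec int_indep_polytope_sum_le)
    next
      case coord
      then have "j \<notin> set xs"
        using data xs(2) by (auto simp: C_def stell_cone_data_def)
      then show ?thesis
        using coord(2) by (auto simp: K_def x_def inner_indvec greedy_point_def greedy_increment_notin
            int_indep_polytope_nonneg)
    qed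
  qed
  ultimately have "stell_cone \<F> I \<subseteq> K"
    unfolding stell_cone_def by (intro hull_minimal)
  moreover have "x \<in> int_indep_polytope g"
    unfolding x_def using g xs(1) by (rule greedy_point_in_int_indep_polytope)
  ultimately show "\<exists>x\<in>int_indep_polytope g. \<forall>w\<in>stell_cone \<F> I. \<forall>y\<in>int_indep_polytope g. w \<bullet> x \<le> w \<bullet> y"
    unfolding K_def by (intro bexI[of _ x]) auto
qed

lemma stell_admissible_int_indep_polytope:
  "int_polymatroid g \<Longrightarrow> stell_admissible (int_indep_polytope g)"
  by (simp add: stell_admissible_def lattice_polytope_int_indep_polytope
      normal_fan_coarsens_stell_int_indep_polytope)

lemma stell_admissible_indep_polytope:
  "polymatroid UNIV rk \<Longrightarrow> stell_admissible (indep_polytope rk)"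
  by (simp add: indep_polytope_eq_int_indep_polytope polymatroid_imp_int_polymatroid
      stell_admissible_int_indep_polytope)

section \<open>Matroids cut out by unit boxes\<close>

definition unit_box :: "'e::finite set \<Rightarrow> (real^'e) set" where
  "unit_box T = {y. \<forall>i. 0 \<le> y $ i \<and> y $ i \<le> of_bool (i \<in> T)}"

definition monotone_envelope :: "('e::finite set \<Rightarrow> int) \<Rightarrow> 'e set \<Rightarrow> int" where
  "monotone_envelope h U = (if U = {} then 0 else Min (h ` {S. U \<subseteq> S}))"

lemma monotone_envelope_le: "U \<noteq> {} \<Longrightarrow> U \<subseteq> S \<Longrightarrow> monotone_envelope h U \<le> h S"
  unfolding monotone_envelope_def by (auto intro: Min_le)

lemma monotone_envelope_attained:
  assumes "U \<noteq> {}"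
  shows "\<exists>S. U \<subseteq> S \<and> monotone_envelope h U = h S"
proof -
  have "Min (h ` {S. U \<subseteq> S}) \<in> h ` {S. U \<subseteq> S}"
    by (rule Min_in) auto
  then show ?thesis
    using assms unfolding monotone_envelope_def by auto
qed

lemma monotone_envelope_nonneg: "(\<And>S. 0 \<le> h S) \<Longrightarrow> 0 \<le> monotone_envelope h U"
  using monotone_envelope_attained[of U h] by (cases "U = {}") (auto simp: monotone_envelope_def)

lemma mono_monotone_envelope:
  fixes h :: "'e::finite set \<Rightarrow> int"
  assumes "\<And>S. 0 \<le> h S"
  shows "mono (monotone_envelope h)"
proof (rule monoI)
  fix A B :: "'e set"
  assume "A \<subseteq> B"
  show "monotone_envelope h A \<le> monotone_envelope h B"
  proof (cases "A = {}")
    case True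
    then show ?thesis
      using monotone_envelope_nonneg[of h B] assms by (simp add: monotone_envelope_def)
  next
    case False
    with \<open>A \<subseteq> B\<close> obtain S where "B \<subseteq> S" "monotone_envelope h B = h S"
      using monotone_envelope_attained[of B h] by blast
    with \<open>A \<subseteq> B\<close> show ?thesis
      using monotone_envelope_le[OF False, of S h] by simp
  qed
qed

lemma submodular_monotone_envelope:
  fixes h :: "'e::finite set \<Rightarrow> int"
  assumes sub: "submodular h" and nonneg: "\<And>S. 0 \<le> h S"
  shows "submodular (monotone_envelope h)"
  unfolding submodular_def
proof (intro allI)
  fix A B :: "'e set"
  show "monotone_envelope h (A \<union> B) + monotone_envelope h (A \<inter> B)
      \<le> monotone_envelope h A + monotone_envelope h B"
  proof (cases "A = {} \<or> B = {}")
    case True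
    then show ?thesis
      by (auto simp: monotone_envelope_def)
  next
    case False
    obtain S where S: "A \<subseteq> S" "monotone_envelope h A = h S"
      using monotone_envelope_attained[of A h] False by blast
    obtain S' where S': "B \<subseteq> S'" "monotone_envelope h B = h S'"
      using monotone_envelope_attained[of B h] False by blast
    have "monotone_envelope h (A \<union> B) \<le> h (S \<union> S')"
      using False S S' by (intro monotone_envelope_le) auto
    moreover have "monotone_envelope h (A \<inter> B) \<le> h (S \<inter> S')"
    proof (cases "A \<inter> B = {}")
      case True
      then show ?thesis
        using nonneg by (simp add: monotone_envelope_def)
    next
      case False
      then show ?thesis
        using S(1) S'(1) by (intro monotone_envelope_le) auto
    qed
    ultimately show ?thesis
      using submodularD[OF sub, of S S'] S(2) S'(2) by linarith
  qed
qed

lemma int_polymatroid_monotone_envelope: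
  "submodular h \<Longrightarrow> (\<And>S. 0 \<le> h S) \<Longrightarrow> int_polymatroid (monotone_envelope h)"
  by (simp add: int_polymatroid_def mono_monotone_envelope submodular_monotone_envelope
      monotone_envelope_def)

lemma int_indep_polytope_monotone_envelope:
  fixes h :: "'e::finite set \<Rightarrow> int"
  assumes nonneg: "\<And>S. 0 \<le> h S"
  shows "int_indep_polytope (monotone_envelope h) = int_indep_polytope h"
proof (intro equalityI subsetI)
  fix y assume y: "y \<in> int_indep_polytope (monotone_envelope h)"
  have "(\<Sum>i\<in>S. y $ i) \<le> of_int (h S)" for S
  proof (cases "S = {}")
    case True
    then show ?thesis
      using nonneg[of S] by simp
  next
    case False
    have "(\<Sum>i\<in>S. y $ i) \<le> of_int (monotone_envelope h S)"
      using y by (rule int_indep_polytope_sum_le)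
    also have "\<dots> \<le> of_int (h S)"
      using monotone_envelope_le[OF False, of S h] by simp
    finally show ?thesis .
  qed
  with y show "y \<in> int_indep_polytope h"
    by (simp add: int_indep_polytope_def)
next
  fix y assume y: "y \<in> int_indep_polytope h"
  have "(\<Sum>i\<in>U. y $ i) \<le> of_int (monotone_envelope h U)" for U
  proof (cases "U = {}")
    case True
    then show ?thesis
      by (simp add: monotone_envelope_def)
  next
    case False
    obtain S where S: "U \<subseteq> S" "monotone_envelope h U = h S"
      using monotone_envelope_attained[OF False] by blast
    have "(\<Sum>i\<in>U. y $ i) \<le> (\<Sum>i\<in>S. y $ i)"
      using y S(1) by (intro sum_mono2) (auto simp: int_indep_polytope_nonneg)
    also have "\<dots> \<le> of_int (h S)"
      using y by (rule int_indep_polytope_sum_le)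
    finally show ?thesis
      using S(2) by simp
  qed
  with y show "y \<in> int_indep_polytope (monotone_envelope h)"
    by (simp add: int_indep_polytope_def)
qed

(* The convolution of g with the rank function of the free matroid on T. *)
definition box_convolution :: "('e::finite set \<Rightarrow> int) \<Rightarrow> 'e set \<Rightarrow> 'e set \<Rightarrow> int" where
  "box_convolution g T U = Min ((\<lambda>A. g A + int (card ((U - A) \<inter> T))) ` Pow U)"

lemma box_convolution_le: "A \<subseteq> U \<Longrightarrow> box_convolution g T U \<le> g A + int (card ((U - A) \<inter> T))"
  unfolding box_convolution_def by (auto intro: Min_le)

lemma box_convolution_attained: "\<exists>A. A \<subseteq> U \<and> box_convolution g T U = g A + int (card ((U - A) \<inter> T))"
proof -
  have "box_convolution g T U \<in> (\<lambda>A. g A + int (card ((U - A) \<inter> T))) ` Pow U"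
    unfolding box_convolution_def by (rule Min_in) auto
  then show ?thesis
    by auto
qed

lemma box_convolution_le_self: "box_convolution g T U \<le> g U"
  using box_convolution_le[of U U g T] by simp

lemma box_convolution_singleton_le_1:
  assumes "int_polymatroid g"
  shows "box_convolution g T {i} \<le> 1"
proof -
  have "card ({i} \<inter> T) \<le> card {i}"
    by (intro card_mono) auto
  then show ?thesis
    using box_convolution_le[of "{}" "{i}" g T] assms by (simp add: int_polymatroid_empty)
qed

lemma card_diff_union_diff_inter_le:
  fixes U V A B T :: "'a set"
  assumes "finite U" "finite V" "A \<subseteq> U" "B \<subseteq> V"
  shows "card ((U \<union> V - (A \<union> B)) \<inter> T) + card ((U \<inter> V - A \<inter> B) \<inter> T)
      \<le> card ((U - A) \<inter> T) + card ((V - B) \<inter> T)"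
proof -
  let ?X = "(U \<union> V - (A \<union> B)) \<inter> T" and ?Y = "(U \<inter> V - A \<inter> B) \<inter> T"
  let ?P = "(U - A) \<inter> T" and ?Q = "(V - B) \<inter> T"
  have fin: "finite ?X" "finite ?Y" "finite ?P" "finite ?Q"
    using assms(1,2) by auto
  have "card ?X + card ?Y = card (?X \<union> ?Y) + card (?X \<inter> ?Y)"
    using fin(1,2) by (rule card_Un_Int)
  also have "\<dots> \<le> card (?P \<union> ?Q) + card (?P \<inter> ?Q)"
    using fin assms(3,4) by (intro add_mono card_mono) auto
  also have "\<dots> = card ?P + card ?Q"
    using card_Un_Int[OF fin(3,4)] by simp
  finally show ?thesis .
qed

lemma mono_box_convolution:
  fixes g :: "'e::finite set \<Rightarrow> int"
  assumes "mono g"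
  shows "mono (box_convolution g T)"
proof (rule monoI)
  fix U V :: "'e set"
  assume "U \<subseteq> V"
  obtain A where A: "A \<subseteq> V" "box_convolution g T V = g A + int (card ((V - A) \<inter> T))"
    using box_convolution_attained by blast
  have "box_convolution g T U \<le> g (A \<inter> U) + int (card ((U - A \<inter> U) \<inter> T))"
    by (rule box_convolution_le) auto
  also have "\<dots> \<le> g A + int (card ((V - A) \<inter> T))"
    using \<open>U \<subseteq> V\<close> monoD[OF assms, of "A \<inter> U" A] by (intro add_mono) (auto intro: card_mono)
  finally show "box_convolution g T U \<le> box_convolution g T V"
    using A(2) by simp
qed

lemma submodular_box_convolution:
  fixes g :: "'e::finite set \<Rightarrow> int"
  assumes "submodular g"
  shows "submodular (box_convolution g T)"
  unfolding submodular_def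
proof (intro allI)
  fix U V :: "'e set"
  obtain A where A: "A \<subseteq> U" "box_convolution g T U = g A + int (card ((U - A) \<inter> T))"
    using box_convolution_attained by blast
  obtain B where B: "B \<subseteq> V" "box_convolution g T V = g B + int (card ((V - B) \<inter> T))"
    using box_convolution_attained by blast
  have "box_convolution g T (U \<union> V) \<le> g (A \<union> B) + int (card ((U \<union> V - (A \<union> B)) \<inter> T))"
    using A B by (intro box_convolution_le) auto
  moreover have "box_convolution g T (U \<inter> V) \<le> g (A \<inter> B) + int (card ((U \<inter> V - A \<inter> B) \<inter> T))"
    using A B by (intro box_convolution_le) auto
  moreover have "g (A \<union> B) + g (A \<inter> B) \<le> g A + g B"
    using assms by (rule submodularD)
  moreover have "card ((U \<union> V - (A \<union> B)) \<inter> T) + card ((U \<inter> V - A \<inter> B) \<inter> T)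
      \<le> card ((U - A) \<inter> T) + card ((V - B) \<inter> T)"
    using A(1) B(1) by (intro card_diff_union_diff_inter_le) auto
  ultimately show "box_convolution g T (U \<union> V) + box_convolution g T (U \<inter> V)
      \<le> box_convolution g T U + box_convolution g T V"
    using A(2) B(2) by linarith
qed

lemma int_polymatroid_box_convolution:
  "int_polymatroid g \<Longrightarrow> int_polymatroid (box_convolution g T)"
  by (simp add: int_polymatroid_def mono_box_convolution submodular_box_convolution box_convolution_def)

lemma int_indep_polytope_box_convolution:
  fixes g :: "'e::finite set \<Rightarrow> int"
  assumes g: "int_polymatroid g"
  shows "int_indep_polytope (box_convolution g T) = int_indep_polytope g \<inter> unit_box T"
proof (intro equalityI subsetI)
  fix y assume y: "y \<in> int_indep_polytope (box_convolution g T)"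
  have "(\<Sum>i\<in>S. y $ i) \<le> of_int (g S)" for S
    using int_indep_polytope_sum_le[OF y, of S] box_convolution_le_self[of g T S] by linarith
  moreover have "y $ i \<le> of_bool (i \<in> T)" for i
    using int_indep_polytope_sum_le[OF y, of "{i}"] box_convolution_le[of "{}" "{i}" g T] g
    by (auto simp: int_polymatroid_empty)
  ultimately show "y \<in> int_indep_polytope g \<inter> unit_box T"
    using y by (simp add: int_indep_polytope_def unit_box_def)
next
  fix y assume y: "y \<in> int_indep_polytope g \<inter> unit_box T"
  have "(\<Sum>i\<in>U. y $ i) \<le> of_int (box_convolution g T U)" for U
  proof -
    obtain A where A: "A \<subseteq> U" "box_convolution g T U = g A + int (card ((U - A) \<inter> T))"
      using box_convolution_attained by blast
    have "(\<Sum>i\<in>U. y $ i) = (\<Sum>i\<in>A. y $ i) + (\<Sum>i\<in>U - A. y $ i)"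
      using sum.subset_diff[OF A(1) finite, of "\<lambda>i. y $ i"] by simp
    also have "(\<Sum>i\<in>A. y $ i) \<le> of_int (g A)"
      using y by (simp add: int_indep_polytope_sum_le)
    also have "(\<Sum>i\<in>U - A. y $ i) \<le> (\<Sum>i\<in>U - A. of_bool (i \<in> T))"
      using y by (intro sum_mono) (simp add: unit_box_def)
    also have "\<dots> = real (card ((U - A) \<inter> T))"
      by simp
    finally show ?thesis
      using A(2) by simp
  qed
  with y show "y \<in> int_indep_polytope (box_convolution g T)"
    by (simp add: int_indep_polytope_def)
qed

lemma matroid_with_box_polytope:
  fixes h :: "'e::finite set \<Rightarrow> int"
  assumes "submodular h" "\<And>S. 0 \<le> h S"
  shows "\<exists>M. matroid UNIV M \<and> indep_polytope M = int_indep_polytope h \<inter> unit_box T \<and>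
    int (M UNIV) \<le> h UNIV"
proof -
  have env: "int_polymatroid (monotone_envelope h)"
    using assms by (rule int_polymatroid_monotone_envelope)
  define q where "q = box_convolution (monotone_envelope h) T"
  have q: "int_polymatroid q"
    unfolding q_def using env by (rule int_polymatroid_box_convolution)
  define M where "M = (\<lambda>U. nat (q U))"
  have matroid: "matroid UNIV M"
    unfolding matroid_def M_def
    using int_polymatroid_imp_polymatroid(1)[OF q] box_convolution_singleton_le_1[OF env]
    by (simp add: q_def nat_le_iff)
  have "indep_polytope M = int_indep_polytope q"
    unfolding M_def by (rule int_polymatroid_imp_polymatroid(2)[OF q])
  also have "\<dots> = int_indep_polytope (monotone_envelope h) \<inter> unit_box T"
    unfolding q_def using env by (rule int_indep_polytope_box_convolution)
  also have "int_indep_polytope (monotone_envelope h) = int_indep_polytope h"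
    using assms(2) by (rule int_indep_polytope_monotone_envelope)
  finally have polytope: "indep_polytope M = int_indep_polytope h \<inter> unit_box T" .
  have "q UNIV \<le> h UNIV"
    using box_convolution_le_self[of "monotone_envelope h" T UNIV] monotone_envelope_le[of UNIV UNIV h]
    by (simp add: q_def)
  then have "int (M UNIV) \<le> h UNIV"
    using int_polymatroid_nonneg[OF q] by (simp add: M_def)
  with matroid polytope show ?thesis
    by blast
qed

section \<open>Decomposition into cells\<close>

definition unit_cell :: "int \<times> bool \<Rightarrow> real set" where
  "unit_cell c = (if snd c then {of_int (fst c) .. of_int (fst c) + 1} else {of_int (fst c)})"

definition cell_sign :: "int \<times> bool \<Rightarrow> int" where
  "cell_sign c = (if snd c then 1 else -1)"

definition cells_up_to :: "nat \<Rightarrow> (int \<times> bool) set" where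
  "cells_up_to B = {0..int B} \<times> {True} \<union> {1..int B} \<times> {False}"

lemma finite_cells_up_to: "finite (cells_up_to B)"
  by (simp add: cells_up_to_def)

lemma cells_up_to_nonneg: "c \<in> cells_up_to B \<Longrightarrow> 0 \<le> fst c"
  by (auto simp: cells_up_to_def)

lemma sum_cells_up_to:
  "(\<Sum>c\<in>cells_up_to B. F c) = (\<Sum>k\<in>{0..int B}. F (k, True)) + (\<Sum>k\<in>{1..int B}. F (k, False))"
proof -
  have "cells_up_to B = (\<lambda>k. (k, True)) ` {0..int B} \<union> (\<lambda>k. (k, False)) ` {1..int B}"
    by (auto simp: cells_up_to_def)
  then have "(\<Sum>c\<in>cells_up_to B. F c)
      = sum F ((\<lambda>k. (k, True)) ` {0..int B}) + sum F ((\<lambda>k. (k, False)) ` {1..int B})"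
    by (simp only:) (rule sum.union_disjoint, auto)
  then show ?thesis
    by (simp add: sum.reindex inj_on_def)
qed

(* Each t in [0, B] lies in the interval [floor t, floor t + 1], and additionally in [t - 1, t]
   exactly when t is one of the points 1, ..., B. *)
lemma card_unit_intervals_containing:
  fixes t :: real
  assumes "0 \<le> t" "t \<le> real B"
  shows "card ({0..int B} \<inter> {k. of_int k \<le> t \<and> t \<le> of_int k + 1})
    = Suc (card ({1..int B} \<inter> {k. t = of_int k}))"
proof -
  let ?I = "{0..int B} \<inter> {k. of_int k \<le> t \<and> t \<le> of_int k + 1}"
  let ?P = "{1..int B} \<inter> {k. t = of_int k}"
  have "?I = insert \<lfloor>t\<rfloor> ((\<lambda>k. k - 1) ` ?P)"
  proof (intro equalityI subsetI)
    fix k assume k: "k \<in> ?I"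
    show "k \<in> insert \<lfloor>t\<rfloor> ((\<lambda>k. k - 1) ` ?P)"
    proof (cases "t = of_int k + 1")
      case True
      with k assms have "k + 1 \<in> ?P"
        by auto
      then show ?thesis
        by (auto intro: image_eqI[where x = "k + 1"])
    next
      case False
      with k have "\<lfloor>t\<rfloor> = k"
        by (intro floor_unique) auto
      then show ?thesis
        by simp
    qed
  next
    fix k assume "k \<in> insert \<lfloor>t\<rfloor> ((\<lambda>k. k - 1) ` ?P)"
    with assms show "k \<in> ?I"
      by (auto simp: le_floor_iff floor_le_iff less_imp_le[OF real_of_int_floor_add_one_gt])
  qed
  moreover have "\<lfloor>t\<rfloor> \<notin> (\<lambda>k. k - 1) ` ?P" "inj_on (\<lambda>k. k - 1) ?P"
    by (auto simp: inj_on_def)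
  ultimately show ?thesis
    by (simp add: card_image)
qed

lemma signed_count_cells:
  fixes t :: real
  assumes "0 \<le> t" "t \<le> real B"
  shows "(\<Sum>c\<in>cells_up_to B. cell_sign c * of_bool (t \<in> unit_cell c)) = 1"
proof -
  have "(\<Sum>c\<in>cells_up_to B. cell_sign c * of_bool (t \<in> unit_cell c))
      = (\<Sum>k\<in>{0..int B}. of_bool (of_int k \<le> t \<and> t \<le> of_int k + 1))
        - (\<Sum>k\<in>{1..int B}. of_bool (t = of_int k))"
    by (simp add: sum_cells_up_to cell_sign_def unit_cell_def sum_negf)
  also have "\<dots> = 1"
    using card_unit_intervals_containing[OF assms] by simp
  finally show ?thesis .
qed

lemma prod_of_bool: "finite A \<Longrightarrow> (\<Prod>i\<in>A. of_bool (P i)) = (of_bool (\<forall>i\<in>A. P i) :: 'a::comm_semiring_1)"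
  by (induction A rule: finite_induct) auto

definition cube :: "('e::finite \<Rightarrow> int \<times> bool) \<Rightarrow> (real^'e) set" where
  "cube c = {p. \<forall>i. p $ i \<in> unit_cell (c i)}"

definition cube_sign :: "('e::finite \<Rightarrow> int \<times> bool) \<Rightarrow> int" where
  "cube_sign c = (\<Prod>i\<in>UNIV. cell_sign (c i))"

definition cube_corner :: "('e::finite \<Rightarrow> int \<times> bool) \<Rightarrow> real^'e" where
  "cube_corner c = (\<chi> i. of_int (fst (c i)))"

lemma indic_eq_signed_sum_cubes:
  fixes X :: "(real^'e::finite) set"
  assumes "\<And>p i. p \<in> X \<Longrightarrow> 0 \<le> p $ i \<and> p $ i \<le> real B"
  shows "indic X p = (\<Sum>c\<in>PiE UNIV (\<lambda>_. cells_up_to B). cube_sign c * indic (X \<inter> cube c) p)"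
proof (cases "p \<in> X")
  case False
  then show ?thesis
    by (simp add: indic_def)
next
  case True
  have "(\<Sum>c\<in>PiE UNIV (\<lambda>_. cells_up_to B). cube_sign c * indic (X \<inter> cube c) p)
      = (\<Sum>c\<in>PiE UNIV (\<lambda>_. cells_up_to B). \<Prod>i\<in>UNIV. cell_sign (c i) * of_bool (p $ i \<in> unit_cell (c i)))"
    using True by (intro sum.cong) (simp_all add: indic_def cube_def cube_sign_def prod.distrib prod_of_bool)
  also have "\<dots> = (\<Prod>i\<in>UNIV. \<Sum>c\<in>cells_up_to B. cell_sign c * of_bool (p $ i \<in> unit_cell c))"
    by (rule prod_sum_PiE[symmetric]) (simp_all add: finite_cells_up_to)
  also have "\<dots> = 1"
    using assms[OF True] by (simp add: signed_count_cells)
  finally show ?thesis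
    using True by (simp add: indic_def)
qed

(* The part of int_indep_polytope f inside cube c, moved to the origin. *)
definition cube_slice :: "('e::finite set \<Rightarrow> int) \<Rightarrow> ('e \<Rightarrow> int \<times> bool) \<Rightarrow> (real^'e) set" where
  "cube_slice f c = int_indep_polytope (\<lambda>S. f S - (\<Sum>i\<in>S. fst (c i))) \<inter> unit_box {i. snd (c i)}"

lemma mem_int_indep_polytope_inter_cube:
  fixes c :: "'e::finite \<Rightarrow> int \<times> bool"
  assumes "\<And>i. 0 \<le> fst (c i)"
  shows "p \<in> int_indep_polytope f \<inter> cube c \<longleftrightarrow> p - cube_corner c \<in> cube_slice f c"
proof -
  have sum_shift: "(\<Sum>i\<in>S. (p - cube_corner c) $ i) = (\<Sum>i\<in>S. p $ i) - of_int (\<Sum>i\<in>S. fst (c i))" for S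
    by (simp add: cube_corner_def sum_subtractf)
  have cell: "p $ i \<in> unit_cell (c i) \<longleftrightarrow>
      0 \<le> (p - cube_corner c) $ i \<and> (p - cube_corner c) $ i \<le> of_bool (snd (c i))" for i
    by (auto simp: unit_cell_def cube_corner_def)
  have sums: "(\<Sum>i\<in>S. (p - cube_corner c) $ i) \<le> of_int (f S - (\<Sum>i\<in>S. fst (c i)))
      \<longleftrightarrow> (\<Sum>i\<in>S. p $ i) \<le> of_int (f S)" for S
    unfolding sum_shift by simp
  have cube: "p \<in> cube c \<longleftrightarrow> p - cube_corner c \<in> unit_box {i. snd (c i)}"
    by (simp add: cube_def unit_box_def cell)
  have nonneg: "0 \<le> p $ i" if "p \<in> cube c" for i
    using that assms[of i] cell[of i] by (auto simp: cube_def cube_corner_def)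
  show ?thesis
  proof
    assume "p \<in> int_indep_polytope f \<inter> cube c"
    then show "p - cube_corner c \<in> cube_slice f c"
      using sums cube by (auto simp: cube_slice_def int_indep_polytope_def unit_box_def)
  next
    assume slice: "p - cube_corner c \<in> cube_slice f c"
    then have "p \<in> cube c"
      using cube by (simp add: cube_slice_def)
    with slice show "p \<in> int_indep_polytope f \<inter> cube c"
      using sums nonneg by (auto simp: cube_slice_def int_indep_polytope_def)
  qed
qed

lemma indic_int_indep_polytope_eq_sum_slices:
  fixes f :: "'e::finite set \<Rightarrow> int"
  assumes f: "int_polymatroid f" "f UNIV \<le> int B"
  shows "indic (int_indep_polytope f) p = (\<Sum>c\<in>PiE UNIV (\<lambda>_. cells_up_to B).
    cube_sign c * indic (cube_slice f c) (p - cube_corner c))"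
proof -
  have "0 \<le> p $ i \<and> p $ i \<le> real B" if "p \<in> int_indep_polytope f" for p i
  proof -
    have "p $ i = (\<Sum>j\<in>{i}. p $ j)"
      by simp
    also have "\<dots> \<le> of_int (f {i})"
      using that by (rule int_indep_polytope_sum_le)
    also have "\<dots> \<le> real B"
      using int_polymatroid_mono[OF f(1), of "{i}" UNIV] f(2) by simp
    finally show ?thesis
      using that by (simp add: int_indep_polytope_nonneg)
  qed
  then have "indic (int_indep_polytope f) p =
      (\<Sum>c\<in>PiE UNIV (\<lambda>_. cells_up_to B). cube_sign c * indic (int_indep_polytope f \<inter> cube c) p)"
    by (rule indic_eq_signed_sum_cubes)
  also have "\<dots> = (\<Sum>c\<in>PiE UNIV (\<lambda>_. cells_up_to B). cube_sign c * indic (cube_slice f c) (p - cube_corner c))"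
  proof (intro sum.cong refl)
    fix c :: "'e \<Rightarrow> int \<times> bool"
    assume "c \<in> PiE UNIV (\<lambda>_. cells_up_to B)"
    then have corner_nonneg: "0 \<le> fst (c i)" for i
      by (auto simp: PiE_iff intro: cells_up_to_nonneg)
    show "cube_sign c * indic (int_indep_polytope f \<inter> cube c) p
        = cube_sign c * indic (cube_slice f c) (p - cube_corner c)"
      using mem_int_indep_polytope_inter_cube[OF corner_nonneg, of p f] by (simp add: indic_def)
  qed
  finally show ?thesis .
qed

lemma matroid_of_cube_slice:
  fixes f :: "'e::finite set \<Rightarrow> int"
  assumes f: "int_polymatroid f" "f UNIV \<le> int B"
    and c: "c \<in> PiE UNIV (\<lambda>_. cells_up_to B)" "c \<noteq> (\<lambda>_. (0, True))"
    and nonempty: "cube_slice f c \<noteq> {}"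
  shows "\<exists>M. matroid UNIV M \<and> indep_polytope M = cube_slice f c \<and> M UNIV < B"
proof -
  define h where "h = (\<lambda>S. f S - (\<Sum>i\<in>S. fst (c i)))"
  have slice: "cube_slice f c = int_indep_polytope h \<inter> unit_box {i. snd (c i)}"
    by (simp add: cube_slice_def h_def)
  have "submodular h"
    unfolding h_def using int_polymatroid_submodular[OF f(1)] by (rule submodular_diff_sum)
  moreover have "0 \<le> h S" for S
    using nonempty mem_int_indep_polytope_imp_nonneg by (auto simp: slice)
  ultimately have "\<exists>M. matroid UNIV M \<and> indep_polytope M = int_indep_polytope h \<inter> unit_box {i. snd (c i)} \<and>
      int (M UNIV) \<le> h UNIV"
    by (rule matroid_with_box_polytope)
  then obtain M where M: "matroid UNIV M" "indep_polytope M = cube_slice f c" "int (M UNIV) \<le> h UNIV"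
    unfolding slice by (elim exE conjE)
  have fst_nonneg: "0 \<le> fst (c i)" for i
    using c(1) by (auto simp: PiE_iff intro: cells_up_to_nonneg)
  \<comment> \<open>every cell other than (0, True) has a positive corner\<close>
  obtain i where "c i \<noteq> (0, True)"
    using c(2) by auto
  moreover have "c i \<in> cells_up_to B"
    using c(1) by (auto simp: PiE_iff)
  ultimately have "1 \<le> fst (c i)"
    by (auto simp: cells_up_to_def)
  also have "fst (c i) \<le> (\<Sum>j\<in>UNIV. fst (c j))"
    using fst_nonneg by (intro member_le_sum) auto
  finally have "h UNIV < int B"
    using f(2) by (simp add: h_def)
  with M show ?thesis
    by auto
qed

lemma cube_slice_base: "cube_slice f (\<lambda>_. (0, True)) = int_indep_polytope f \<inter> unit_box UNIV"
  by (simp add: cube_slice_def)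

lemma indic_translate: "indic ((\<lambda>y. y + u) ` Q) x = indic Q (x - u)"
proof -
  have "x \<in> (\<lambda>y. y + u) ` Q \<longleftrightarrow> x - u \<in> Q"
    by (auto simp: image_iff) (metis diff_add_cancel)
  then show ?thesis
    by (simp add: indic_def)
qed

lemma sum_translation_differences_in_stell_translation_rel:
  assumes "finite G" "\<And>c. c \<in> G \<Longrightarrow> stell_admissible (Q c) \<and> integral_vec (u c)"
  shows "(\<lambda>x. \<Sum>c\<in>G. a c * (indic (Q c) x - indic (Q c) (x - u c))) \<in> stell_translation_rel"
  using assms
proof (induction G rule: finite_induct)
  case empty
  then show ?case
    using stell_translation_rel.zero by simp
next
  case (insert c G)
  then have "(\<lambda>x. \<Sum>c\<in>G. a c * (indic (Q c) x - indic (Q c) (x - u c))) \<in> stell_translation_rel"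
    by simp
  from stell_translation_rel.step[OF this, of "Q c" "u c" "a c"] insert
  show ?case
    by (simp add: indic_translate add.commute)
qed

lemma indic_int_indep_polytope_eq_base_plus_slices:
  fixes f :: "'e::finite set \<Rightarrow> int"
  assumes f: "int_polymatroid f" "f UNIV \<le> int B"
  defines "G \<equiv> {c \<in> PiE UNIV (\<lambda>_. cells_up_to B) - {\<lambda>_. (0, True)}. cube_slice f c \<noteq> {}}"
  shows "indic (int_indep_polytope f) x = indic (int_indep_polytope f \<inter> unit_box UNIV) x
    + (\<Sum>c\<in>G. cube_sign c * indic (cube_slice f c) (x - cube_corner c))"
proof -
  let ?C = "PiE UNIV (\<lambda>_::'e. cells_up_to B)" and ?c0 = "\<lambda>_::'e. (0::int, True)"
  let ?term = "\<lambda>c. cube_sign c * indic (cube_slice f c) (x - cube_corner c)"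
  have fin: "finite ?C"
    by (simp add: finite_PiE finite_cells_up_to)
  have "?c0 \<in> ?C"
    by (simp add: cells_up_to_def PiE_iff)
  moreover have "cube_corner ?c0 = 0"
    by (simp add: cube_corner_def vec_eq_iff)
  ultimately have "indic (int_indep_polytope f) x
      = indic (int_indep_polytope f \<inter> unit_box UNIV) x + (\<Sum>c\<in>?C - {?c0}. ?term c)"
    using fin f by (simp add: indic_int_indep_polytope_eq_sum_slices sum.remove cube_sign_def
        cell_sign_def cube_slice_base)
  also have "(\<Sum>c\<in>?C - {?c0}. ?term c) = (\<Sum>c\<in>G. ?term c)"
    using fin by (intro sum.mono_neutral_right) (auto simp: G_def indic_def)
  finally show ?thesis .
qed

lemma int_indep_polytope_matroid_decomposition:
  fixes f :: "'e::finite set \<Rightarrow> int"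
  assumes f: "int_polymatroid f" "f UNIV \<le> int B"
  shows "\<exists>N (a :: nat \<Rightarrow> int) (Ms :: nat \<Rightarrow> ('e set \<Rightarrow> nat)).
           (\<forall>k<N. matroid UNIV (Ms k) \<and> Ms k UNIV < B) \<and>
           (\<lambda>x. indic (int_indep_polytope f) x - indic (int_indep_polytope f \<inter> unit_box UNIV) x
                 - (\<Sum>k<N. a k * indic (indep_polytope (Ms k)) x)) \<in> stell_translation_rel"
proof -
  define G where "G = {c \<in> PiE UNIV (\<lambda>_. cells_up_to B) - {\<lambda>_. (0, True)}. cube_slice f c \<noteq> {}}"
  have "finite G"
    unfolding G_def by (rule finite_subset[of _ "PiE UNIV (\<lambda>_. cells_up_to B)"])
      (auto simp: finite_PiE finite_cells_up_to)
  have "\<forall>c\<in>G. \<exists>M. matroid UNIV M \<and> indep_polytope M = cube_slice f c \<and> M UNIV < B"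
    using matroid_of_cube_slice[OF f] by (auto simp: G_def)
  then obtain M where M: "\<forall>c\<in>G. matroid UNIV (M c) \<and> indep_polytope (M c) = cube_slice f c \<and> M c UNIV < B"
    by (elim bchoice[THEN exE])
  obtain e where e: "bij_betw e {..<card G} G"
    using ex_bij_betw_nat_finite[OF \<open>finite G\<close>] by (auto simp: atLeast0LessThan)
  have "(\<Sum>k<card G. cube_sign (e k) * indic (indep_polytope (M (e k))) x)
      = (\<Sum>c\<in>G. cube_sign c * indic (cube_slice f c) x)" for x
    using sum.reindex_bij_betw[OF e, of "\<lambda>c. cube_sign c * indic (indep_polytope (M c)) x"] M
    by (simp cong: sum.cong)
  with f have "(\<lambda>x. indic (int_indep_polytope f) x - indic (int_indep_polytope f \<inter> unit_box UNIV) x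
        - (\<Sum>k<card G. cube_sign (e k) * indic (indep_polytope (M (e k))) x))
      = (\<lambda>x. \<Sum>c\<in>G. - cube_sign c * (indic (cube_slice f c) x - indic (cube_slice f c) (x - cube_corner c)))"
    by (simp add: indic_int_indep_polytope_eq_base_plus_slices G_def sum_subtractf algebra_simps)
  also have "\<dots> \<in> stell_translation_rel"
  proof (intro sum_translation_differences_in_stell_translation_rel \<open>finite G\<close> conjI)
    fix c assume "c \<in> G"
    with M show "stell_admissible (cube_slice f c)"
      by (metis matroid_def stell_admissible_indep_polytope)
    show "integral_vec (cube_corner c)"
      by (simp add: integral_vec_def cube_corner_def)
  qed
  finally show ?thesis
    using M e by (intro exI[of _ "card G"] exI[of _ "\<lambda>k. cube_sign (e k)"] exI[of _ "\<lambda>k. M (e k)"])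
      (auto dest: bij_betwE)
qed

section \<open>Expansion and multisymmetric lift\<close>

lemma int_polymatroid_expansion:
  fixes \<pi> :: "'e \<Rightarrow> 'b"
  assumes "\<pi> ` UNIV \<subseteq> E" "polymatroid E rk"
  shows "int_polymatroid (\<lambda>S. int (rk (\<pi> ` S)))"
  unfolding int_polymatroid_def submodular_def
proof (intro conjI allI monoI)
  have rk_mono: "rk A \<le> rk A'" if "A \<subseteq> A'" "A' \<subseteq> E" for A A'
    using assms(2) that by (simp add: polymatroid_def)
  have image_sub: "\<pi> ` S \<subseteq> E" for S
    using assms(1) by auto
  show "int (rk (\<pi> ` {})) = 0"
    using assms(2) by (simp add: polymatroid_def)
  show "int (rk (\<pi> ` A)) \<le> int (rk (\<pi> ` B))" if "A \<subseteq> B" for A B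
    using that rk_mono image_sub by (simp add: image_mono)
  fix A B :: "'e set"
  have "rk (\<pi> ` A \<union> \<pi> ` B) + rk (\<pi> ` A \<inter> \<pi> ` B) \<le> rk (\<pi> ` A) + rk (\<pi> ` B)"
    using assms(2) image_sub by (simp add: polymatroid_def)
  moreover have "rk (\<pi> ` (A \<inter> B)) \<le> rk (\<pi> ` A \<inter> \<pi> ` B)"
    using image_sub by (intro rk_mono) auto
  ultimately show "int (rk (\<pi> ` (A \<union> B))) + int (rk (\<pi> ` (A \<inter> B))) \<le> int (rk (\<pi> ` A)) + int (rk (\<pi> ` B))"
    by (simp add: image_Un)
qed

lemma indep_polytope_expansion:
  "indep_polytope (expansion \<pi> rk) = int_indep_polytope (\<lambda>S. int (rk (\<pi> ` S)))"
  by (simp add: expansion_def indep_polytope_eq_int_indep_polytope)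

lemma multisym_lift_values:
  "{rk A + card (U - \<pi> -` A) | A. A \<subseteq> E} = (\<lambda>A. rk A + card (U - \<pi> -` A)) ` Pow E"
  by auto

lemma multisym_lift_le:
  "finite E \<Longrightarrow> A \<subseteq> E \<Longrightarrow> multisym_lift E \<pi> rk U \<le> rk A + card (U - \<pi> -` A)"
  unfolding multisym_lift_def multisym_lift_values by (intro Min_le) auto

lemma multisym_lift_attained:
  assumes "finite E"
  shows "\<exists>A\<subseteq>E. multisym_lift E \<pi> rk U = rk A + card (U - \<pi> -` A)"
proof -
  have "multisym_lift E \<pi> rk U \<in> (\<lambda>A. rk A + card (U - \<pi> -` A)) ` Pow E"
    unfolding multisym_lift_def multisym_lift_values using assms by (intro Min_in) auto
  then show ?thesis
    by auto
qed

lemma indep_polytope_multisym_lift: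
  fixes \<pi> :: "'e::finite \<Rightarrow> 'b"
  assumes E: "finite E" "\<pi> ` UNIV \<subseteq> E" and rk: "polymatroid E rk"
  shows "indep_polytope (multisym_lift E \<pi> rk) = int_indep_polytope (\<lambda>S. int (rk (\<pi> ` S))) \<inter> unit_box UNIV"
proof (intro equalityI subsetI)
  fix y assume "y \<in> indep_polytope (multisym_lift E \<pi> rk)"
  then have y: "\<And>i. 0 \<le> y $ i" "\<And>U. (\<Sum>i\<in>U. y $ i) \<le> real (multisym_lift E \<pi> rk U)"
    by (simp_all add: indep_polytope_def)
  have "y $ i \<le> 1" for i
    using y(2)[of "{i}"] multisym_lift_le[OF E(1), of "{}" \<pi> rk "{i}"] rk by (simp add: polymatroid_def)
  moreover have "(\<Sum>i\<in>S. y $ i) \<le> real (rk (\<pi> ` S))" for S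
  proof -
    have "multisym_lift E \<pi> rk S \<le> rk (\<pi> ` S) + card (S - \<pi> -` (\<pi> ` S))"
      using E by (intro multisym_lift_le) auto
    moreover have "S - \<pi> -` (\<pi> ` S) = {}"
      by auto
    ultimately have "multisym_lift E \<pi> rk S \<le> rk (\<pi> ` S)"
      by (simp only: card.empty add_0_right)
    with y(2)[of S] show ?thesis
      by linarith
  qed
  ultimately show "y \<in> int_indep_polytope (\<lambda>S. int (rk (\<pi> ` S))) \<inter> unit_box UNIV"
    using y(1) by (simp add: int_indep_polytope_def unit_box_def)
next
  fix y assume y: "y \<in> int_indep_polytope (\<lambda>S. int (rk (\<pi> ` S))) \<inter> unit_box UNIV"
  then have y_P: "y \<in> int_indep_polytope (\<lambda>S. int (rk (\<pi> ` S)))"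
    by simp
  have "(\<Sum>i\<in>U. y $ i) \<le> real (multisym_lift E \<pi> rk U)" for U
  proof -
    obtain A where A: "A \<subseteq> E" "multisym_lift E \<pi> rk U = rk A + card (U - \<pi> -` A)"
      using multisym_lift_attained[OF E(1)] by blast
    have "(\<Sum>i\<in>U. y $ i) = (\<Sum>i\<in>U \<inter> \<pi> -` A. y $ i) + (\<Sum>i\<in>U - \<pi> -` A. y $ i)"
      by (simp add: sum.Int_Diff)
    also have "(\<Sum>i\<in>U \<inter> \<pi> -` A. y $ i) \<le> real (rk (\<pi> ` (U \<inter> \<pi> -` A)))"
      using int_indep_polytope_sum_le[OF y_P] by simp
    also have "\<dots> \<le> real (rk A)"
      using rk A(1) unfolding polymatroid_def by (simp add: image_subset_iff)
    also have "(\<Sum>i\<in>U - \<pi> -` A. y $ i) \<le> (\<Sum>i\<in>U - \<pi> -` A. 1)"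
      using y by (intro sum_mono) (simp add: unit_box_def)
    finally show ?thesis
      using A(2) by simp
  qed
  with y show "y \<in> indep_polytope (multisym_lift E \<pi> rk)"
    by (simp add: indep_polytope_def int_indep_polytope_def)
qed

theorem proposition4p5:
  fixes m :: nat and \<pi> :: "'e::finite \<Rightarrow> nat" and rk :: "nat set \<Rightarrow> nat"
  assumes "\<pi> ` UNIV \<subseteq> {1..m}"
    and "polymatroid {1..m} rk"
    and "rk {1..m} \<le> CARD('e)"
  shows "\<exists>N (a :: nat \<Rightarrow> int) (Ms :: nat \<Rightarrow> ('e set \<Rightarrow> nat)).
           (\<forall>k<N. matroid UNIV (Ms k) \<and> Ms k UNIV < rk {1..m}) \<and>
           (\<lambda>x. indic (indep_polytope (expansion \<pi> rk)) x
                 - indic (indep_polytope (multisym_lift {1..m} \<pi> rk)) x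
                 - (\<Sum>k<N. a k * indic (indep_polytope (Ms k)) x))
             \<in> stell_translation_rel"
proof -
  let ?f = "\<lambda>S. int (rk (\<pi> ` S))"
  have "int_polymatroid ?f"
    using assms(1,2) by (rule int_polymatroid_expansion)
  moreover have "?f UNIV \<le> int (rk {1..m})"
    using assms(1,2) by (simp add: polymatroid_def)
  ultimately have "\<exists>N (a :: nat \<Rightarrow> int) (Ms :: nat \<Rightarrow> ('e set \<Rightarrow> nat)).
      (\<forall>k<N. matroid UNIV (Ms k) \<and> Ms k UNIV < rk {1..m}) \<and>
      (\<lambda>x. indic (int_indep_polytope ?f) x - indic (int_indep_polytope ?f \<inter> unit_box UNIV) x
           - (\<Sum>k<N. a k * indic (indep_polytope (Ms k)) x)) \<in> stell_translation_rel"
    by (rule int_indep_polytope_matroid_decomposition)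
  moreover have "indep_polytope (multisym_lift {1..m} \<pi> rk) = int_indep_polytope ?f \<inter> unit_box UNIV"
    using assms(1,2) by (intro indep_polytope_multisym_lift) simp_all
  ultimately show ?thesis
    by (simp only: indep_polytope_expansion)
qed

end
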